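(* Let $(\Omega,\mathcal{F})$ be a measurable space and $T:\Omega\to\Omega$ a measurable map. Let $\mathbb{V}(A)=\sup_{P\in\Theta}P(A)$, $A\in\mathcal{F}$, be an upper probability, where $\Theta=\{P \text{ probability on }(\Omega,\mathcal{F}) : P(A)\le \mathbb{V}(A)\ \forall A\in\mathcal{F}\}$. Assume $\mathbb{V}$ is continuous (from above), $T$-invariant, and $T$-ergodic. Let $\Theta_0$ be the set of $T$-invariant probabilities in $\Theta$. Let $P^*$ be a $T$-ergodic probability on $(\Omega,\mathcal{F})$. If there exists $P\in\Theta_0$ such that $P^*$ is absolutely continuous with respect to $P$, then $P^*\in\Theta_0$.
   Context: $\mathcal{I}=\{A\in\mathcal{F}: T^{-1}A=A\}$ is the $T$-invariant $\sigma$-algebra. $\mathbb{V}$ is continuous if $\mathbb{V}(A_n)\to 0$ whenever $A_n\in\mathcal{F}$, $A_n\downarrow\emptyset$. $\mathbb{V}$ is $T$-invariant if $\mathbb{V}(T^{-1}A)=\mathbb{V}(A)$ for all $A\in\mathcal{F}$. A continuous upper probability $\mathbb{V}$ is $T$-ergodic if $\mathbb{V}(A)\in\{0,1\}$ for every $A\in\mathcal{I}$. A probability $P$ is $T$-invariant if $P(T^{-1}A)=P(A)$ for all $A\in\mathcal{F}$, and $T$-ergodic if it is $T$-invariant and $P(A)\in\{0,1\}$ for all $A\in\mathcal{I}$. *)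

theory Defs
  imports "HOL-Probability.Probability"
begin

text \<open>The measurable space is represented by a measure M of which only space M and sets M
 are used. Set functions are real valued on sets M.\<close>

definition inv_sets :: "'a measure \<Rightarrow> ('a \<Rightarrow> 'a) \<Rightarrow> 'a set set" where
  "inv_sets M T = {A \<in> sets M. T -` A \<inter> space M = A}"

definition prob_on :: "'a measure \<Rightarrow> 'a measure \<Rightarrow> bool" where
  "prob_on M P \<longleftrightarrow> prob_space P \<and> sets P = sets M"

definition core :: "'a measure \<Rightarrow> ('a set \<Rightarrow> real) \<Rightarrow> 'a measure set" where
  "core M V = {P. prob_on M P \<and> (\<forall>A\<in>sets M. measure P A \<le> V A)}"

definition upper_probability :: "'a measure \<Rightarrow> ('a set \<Rightarrow> real) \<Rightarrow> bool" where
  "upper_probability M V \<longleftrightarrow> (\<forall>A\<in>sets M. V A = (SUP P\<in>core M V. measure P A))"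

definition continuous_capacity :: "'a measure \<Rightarrow> ('a set \<Rightarrow> real) \<Rightarrow> bool" where
  "continuous_capacity M V \<longleftrightarrow>
     (\<forall>An. (\<forall>n. An n \<in> sets M) \<longrightarrow> decseq An \<longrightarrow> (\<Inter>n. An n) = {} \<longrightarrow>
        (\<lambda>n. V (An n)) \<longlonglongrightarrow> 0)"

definition invariant_capacity :: "'a measure \<Rightarrow> ('a \<Rightarrow> 'a) \<Rightarrow> ('a set \<Rightarrow> real) \<Rightarrow> bool" where
  "invariant_capacity M T V \<longleftrightarrow> (\<forall>A\<in>sets M. V (T -` A \<inter> space M) = V A)"

definition ergodic_capacity :: "'a measure \<Rightarrow> ('a \<Rightarrow> 'a) \<Rightarrow> ('a set \<Rightarrow> real) \<Rightarrow> bool" where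
  "ergodic_capacity M T V \<longleftrightarrow> (\<forall>A\<in>inv_sets M T. V A = 0 \<or> V A = 1)"

definition invariant_prob :: "'a measure \<Rightarrow> ('a \<Rightarrow> 'a) \<Rightarrow> 'a measure \<Rightarrow> bool" where
  "invariant_prob M T P \<longleftrightarrow> prob_on M P \<and>
     (\<forall>A\<in>sets M. measure P (T -` A \<inter> space M) = measure P A)"

definition ergodic_prob :: "'a measure \<Rightarrow> ('a \<Rightarrow> 'a) \<Rightarrow> 'a measure \<Rightarrow> bool" where
  "ergodic_prob M T P \<longleftrightarrow> invariant_prob M T P \<and>
     (\<forall>A\<in>inv_sets M T. measure P A = 0 \<or> measure P A = 1)"

definition invariant_core :: "'a measure \<Rightarrow> ('a \<Rightarrow> 'a) \<Rightarrow> ('a set \<Rightarrow> real) \<Rightarrow> 'a measure set" where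
  "invariant_core M T V = {P \<in> core M V. invariant_prob M T P}"

end

theory Submission
  imports Defs
begin

(* Suppose Pstar A > s > V A for an event A, and let G be the set of points whose frequency
   of visits to A along the T-orbit has lim inf greater than s; G is T-invariant. Since Pstar
   is T-invariant and Pstar A > s, a maximal inequality (obtained by covering orbit segments
   with blocks of bounded length) shows Pstar G > 0. By absolute continuity P G > 0, hence
   V G > 0, and ergodicity of V forces V G = 1. On the other hand, integrating visit counts
   against any Q in the core gives s * Q G \<le> sup_k Q (T^-k A) \<le> sup_k V (T^-k A) = V A, so
   s = s * V G \<le> V A, a contradiction. *)

lemma sum_lessThan_split:
  fixes f :: "nat \<Rightarrow> 'b::comm_monoid_add"
  assumes "n \<le> L"
  shows "(\<Sum>k<L. f k) = (\<Sum>k<n. f k) + (\<Sum>k<L - n. f (n + k))"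
proof -
  have "(\<Sum>k<n + m. f k) = (\<Sum>k<n. f k) + (\<Sum>k<m. f (n + k))" for m
    by (induction m) (simp_all add: add.assoc)
  then show ?thesis
    using assms by (metis le_add_diff_inverse)
qed

(* Greedy covering of {..<L}: at each index either b pays for a, or a block of length at most N
   starts there on which a has average at most c; only a final incomplete block costs up to N. *)
lemma sum_le_by_blocks:
  fixes a b :: "nat \<Rightarrow> real"
  assumes "\<And>k. 0 \<le> a k \<and> a k \<le> 1" and "\<And>k. 0 \<le> b k" and "0 \<le> c"
    and "\<And>k. 1 \<le> b k \<or> (\<exists>n\<in>{1..N}. (\<Sum>i<n. a (k + i)) \<le> real n * c)"
  shows "(\<Sum>k<L. a k) \<le> real L * c + (\<Sum>k<L. b k) + real N"
  using assms
proof (induction L arbitrary: a b rule: less_induct)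
  case (less L)
  have b_sum: "0 \<le> (\<Sum>k<n. b k)" for n
    using less.prems(2) by (simp add: sum_nonneg)
  consider "L = 0" | "L \<le> N"
    | n where "1 \<le> n" "n \<le> L" "(\<Sum>k<n. a k) \<le> real n * c + (\<Sum>k<n. b k)"
  proof (cases "L = 0 \<or> 1 \<le> b 0")
    case True
    then show thesis
      using that(1) that(3)[of 1] less.prems(1)[of 0] \<open>0 \<le> c\<close> by force
  next
    case False
    then obtain n where "n \<in> {1..N}" "(\<Sum>k<n. a k) \<le> real n * c"
      using less.prems(4)[of 0] by auto
    then show thesis
      using that(2) that(3)[of n] b_sum[of n] by (cases "n \<le> L") auto
  qed
  then show ?case
  proof cases
    case 1
    then show ?thesis by simp
  next
    case 2
    have "(\<Sum>k<L. a k) \<le> real L"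
      using sum_mono[of "{..<L}" a "\<lambda>_. 1"] less.prems(1) by simp
    moreover have "0 \<le> real L * c"
      using \<open>0 \<le> c\<close> by simp
    ultimately show ?thesis
      using 2 b_sum[of L] by linarith
  next
    case (3 n)
    have "(\<Sum>k<L - n. a (n + k)) \<le> real (L - n) * c + (\<Sum>k<L - n. b (n + k)) + real N"
    proof (rule less.IH[of "L - n" "\<lambda>k. a (n + k)" "\<lambda>k. b (n + k)"])
      fix k
      show "1 \<le> b (n + k) \<or> (\<exists>m\<in>{1..N}. (\<Sum>i<m. a (n + (k + i))) \<le> real m * c)"
        using less.prems(4)[of "n + k"] by (simp add: add.assoc)
    qed (use less.prems 3 in auto)
    then show ?thesis
      using 3 sum_lessThan_split[OF \<open>n \<le> L\<close>, of a] sum_lessThan_split[OF \<open>n \<le> L\<close>, of b]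
      by (simp add: of_nat_diff algebra_simps)
  qed
qed

definition visit_count :: "('a \<Rightarrow> 'a) \<Rightarrow> 'a set \<Rightarrow> nat \<Rightarrow> 'a \<Rightarrow> real" where
  "visit_count T A n x = (\<Sum>k<n. indicator A ((T ^^ k) x))"

lemma visit_count_measurable[measurable]:
  assumes [measurable]: "T \<in> measurable M M" "A \<in> sets M"
  shows "visit_count T A n \<in> borel_measurable M"
  unfolding visit_count_def[abs_def] by measurable

lemma visit_count_nonneg: "0 \<le> visit_count T A n x"
  by (simp add: visit_count_def sum_nonneg)

lemma visit_count_funpow: "visit_count T A n ((T ^^ k) x) = (\<Sum>i<n. indicator A ((T ^^ (k + i)) x))"
  unfolding visit_count_def by (metis add.commute comp_apply funpow_add)

lemma visit_count_shift: "\<bar>visit_count T A n (T x) - visit_count T A n x\<bar> \<le> 1"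
proof -
  have "visit_count T A (Suc n) x = indicator A x + visit_count T A n (T x)"
    unfolding visit_count_def by (subst sum.lessThan_Suc_shift) (simp add: funpow_swap1 funpow_Suc_right)
  moreover have "visit_count T A (Suc n) x = visit_count T A n x + indicator A ((T ^^ n) x)"
    by (simp add: visit_count_def)
  ultimately have
    "visit_count T A n (T x) - visit_count T A n x = indicator A ((T ^^ n) x) - indicator A x"
    by linarith
  then show ?thesis
    by (simp add: indicator_def)
qed

definition frequent_from :: "'a measure \<Rightarrow> ('a \<Rightarrow> 'a) \<Rightarrow> 'a set \<Rightarrow> real \<Rightarrow> nat \<Rightarrow> 'a set" where
  "frequent_from M T A r N = {x \<in> space M. \<forall>n\<ge>N. real n * r \<le> visit_count T A n x}"

lemma frequent_from_sets:
  assumes [measurable]: "T \<in> measurable M M" "A \<in> sets M"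
  shows "frequent_from M T A r N \<in> sets M"
  unfolding frequent_from_def by measurable

lemma frequent_from_antimono:
  assumes "r' \<le> r" "N \<le> N'"
  shows "frequent_from M T A r N \<subseteq> frequent_from M T A r' N'"
proof -
  have "real n * r' \<le> real n * r" for n
    using assms(1) by (simp add: mult_left_mono)
  then show ?thesis
    using assms(2) unfolding frequent_from_def by (auto intro: order_trans)
qed

lemma frequent_from_perturb:
  assumes "x \<in> frequent_from M T A r N" and "y \<in> space M" and "r' < r"
    and "\<And>n. visit_count T A n x \<le> visit_count T A n y + 1"
  shows "y \<in> frequent_from M T A r' (max N (nat \<lceil>1 / (r - r')\<rceil>))"
  unfolding frequent_from_def
proof (intro CollectI conjI allI impI)
  fix n assume n: "max N (nat \<lceil>1 / (r - r')\<rceil>) \<le> n"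
  then have "1 \<le> real n * (r - r')"
    using \<open>r' < r\<close> by (simp add: field_simps nat_le_iff ceiling_le_iff)
  moreover have "real n * r \<le> visit_count T A n x"
    using assms(1) n by (simp add: frequent_from_def)
  ultimately show "real n * r' \<le> visit_count T A n y"
    using assms(4)[of n] by (simp add: algebra_simps)
qed (fact \<open>y \<in> space M\<close>)

definition frequent_upto :: "'a measure \<Rightarrow> ('a \<Rightarrow> 'a) \<Rightarrow> 'a set \<Rightarrow> real \<Rightarrow> nat \<Rightarrow> 'a set" where
  "frequent_upto M T A r N = {x \<in> space M. \<forall>n\<in>{1..N}. real n * r \<le> visit_count T A n x}"

lemma frequent_upto_sets:
  assumes [measurable]: "T \<in> measurable M M" "A \<in> sets M"
  shows "frequent_upto M T A r N \<in> sets M"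
  unfolding frequent_upto_def by measurable

lemma visit_count_le_by_blocks:
  assumes T: "T \<in> measurable M M" and x: "x \<in> space M" and "0 \<le> r"
  shows "visit_count T A L x \<le> real L * r + visit_count T (frequent_upto M T A r N) L x + real N"
  unfolding visit_count_def
proof (rule sum_le_by_blocks)
  fix k
  show "0 \<le> (indicator A ((T ^^ k) x) :: real) \<and> (indicator A ((T ^^ k) x) :: real) \<le> 1"
    "0 \<le> (indicator (frequent_upto M T A r N) ((T ^^ k) x) :: real)"
    by (simp_all add: indicator_le_1)
  have "(T ^^ k) x \<in> space M"
    using measurable_space[OF measurable_compose_n[OF T] x] .
  then show "1 \<le> (indicator (frequent_upto M T A r N) ((T ^^ k) x) :: real) \<or>
    (\<exists>n\<in>{1..N}. (\<Sum>i<n. indicator A ((T ^^ (k + i)) x)) \<le> real n * r)"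
    by (cases "(T ^^ k) x \<in> frequent_upto M T A r N")
      (simp, fastforce simp: frequent_upto_def visit_count_funpow not_le intro: less_imp_le)
qed (fact \<open>0 \<le> r\<close>)

definition liminf_frequency_gt :: "'a measure \<Rightarrow> ('a \<Rightarrow> 'a) \<Rightarrow> 'a set \<Rightarrow> real \<Rightarrow> 'a set" where
  "liminf_frequency_gt M T A s = (\<Union>m. \<Union>N. frequent_from M T A (s + 1 / Suc m) N)"

lemma liminf_frequency_gt_sets:
  assumes [measurable]: "T \<in> measurable M M" "A \<in> sets M"
  shows "liminf_frequency_gt M T A s \<in> sets M"
  unfolding liminf_frequency_gt_def using frequent_from_sets[OF assms] by blast

lemma mem_liminf_frequency_gt_iff:
  "x \<in> liminf_frequency_gt M T A s \<longleftrightarrow> (\<exists>r>s. \<exists>N. x \<in> frequent_from M T A r N)"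
proof
  assume "x \<in> liminf_frequency_gt M T A s"
  then obtain m N where "x \<in> frequent_from M T A (s + 1 / Suc m) N"
    by (auto simp: liminf_frequency_gt_def)
  then show "\<exists>r>s. \<exists>N. x \<in> frequent_from M T A r N"
    by (intro exI[of _ "s + 1 / Suc m"]) auto
next
  assume "\<exists>r>s. \<exists>N. x \<in> frequent_from M T A r N"
  then obtain r N where "s < r" "x \<in> frequent_from M T A r N"
    by blast
  moreover obtain m where "1 / real (Suc m) < r - s"
    using reals_Archimedean \<open>s < r\<close> by (metis diff_gt_0_iff_gt inverse_eq_divide)
  moreover have "s + 1 / Suc m \<le> r"
    using \<open>1 / real (Suc m) < r - s\<close> by linarith
  ultimately have "x \<in> frequent_from M T A (s + 1 / Suc m) N"
    using frequent_from_antimono[of "s + 1 / Suc m" r N N M T A] by auto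
  then show "x \<in> liminf_frequency_gt M T A s"
    by (auto simp: liminf_frequency_gt_def)
qed

lemma liminf_frequency_gt_inv_sets:
  assumes T: "T \<in> measurable M M" and A: "A \<in> sets M"
  shows "liminf_frequency_gt M T A s \<in> inv_sets M T"
proof -
  let ?G = "liminf_frequency_gt M T A s"
  have closed: "y \<in> ?G" if "x \<in> ?G" "y \<in> space M"
    "\<And>n. visit_count T A n x \<le> visit_count T A n y + 1" for x y
  proof -
    obtain r N where "s < r" "x \<in> frequent_from M T A r N"
      using \<open>x \<in> ?G\<close> by (auto simp: mem_liminf_frequency_gt_iff)
    moreover have "s < (s + r) / 2" "(s + r) / 2 < r"
      using \<open>s < r\<close> by simp_all
    ultimately have "y \<in> frequent_from M T A ((s + r) / 2) (max N (nat \<lceil>1 / (r - (s + r) / 2)\<rceil>))"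
      using that by (intro frequent_from_perturb) auto
    then show ?thesis
      using \<open>s < (s + r) / 2\<close> unfolding mem_liminf_frequency_gt_iff by blast
  qed
  have "?G \<subseteq> space M"
    using sets.sets_into_space[OF liminf_frequency_gt_sets[OF T A]] .
  moreover have "x \<in> ?G \<longleftrightarrow> T x \<in> ?G" if "x \<in> space M" for x
  proof -
    have "visit_count T A n x \<le> visit_count T A n (T x) + 1"
      "visit_count T A n (T x) \<le> visit_count T A n x + 1" for n
      using visit_count_shift[of T A n x] by (simp_all add: abs_le_iff)
    then show ?thesis
      using closed[of x "T x"] closed[of "T x" x] measurable_space[OF T that] that by blast
  qed
  ultimately show ?thesis
    using liminf_frequency_gt_sets[OF T A] by (auto simp: inv_sets_def)
qed

lemma preimage_funpow_invariant:
  assumes T: "T \<in> measurable M M" and f: "\<And>B. B \<in> sets M \<Longrightarrow> f (T -` B \<inter> space M) = f B"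
    and A: "A \<in> sets M"
  shows "f ((T ^^ k) -` A \<inter> space M) = f A"
proof (induction k)
  case 0
  show ?case
    using sets.sets_into_space[OF A] by (simp add: Int_absorb2)
next
  case (Suc k)
  have "(T ^^ Suc k) -` A \<inter> space M = T -` ((T ^^ k) -` A \<inter> space M) \<inter> space M"
    using measurable_space[OF T] by (auto simp: funpow_swap1)
  moreover have "(T ^^ k) -` A \<inter> space M \<in> sets M"
    using measurable_sets[OF measurable_compose_n[OF T] A] .
  ultimately show ?case
    using f Suc.IH by metis
qed

lemma integral_visit_count:
  assumes Q: "finite_measure Q" "sets Q = sets M" and T: "T \<in> measurable M M" and A: "A \<in> sets M"
  shows "integrable Q (visit_count T A n)"
    and "(\<integral>x. visit_count T A n x \<partial>Q) = (\<Sum>k<n. measure Q ((T ^^ k) -` A \<inter> space M))"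
proof -
  interpret finite_measure Q by fact
  let ?B = "\<lambda>k. (T ^^ k) -` A \<inter> space M"
  have B: "?B k \<in> sets Q" for k
    using measurable_sets[OF measurable_compose_n[OF T] A] Q(2) by simp
  have eq: "visit_count T A n x = (\<Sum>k<n. indicator (?B k) x)" if "x \<in> space Q" for x
    using that sets_eq_imp_space_eq[OF Q(2)] by (simp add: visit_count_def indicator_def)
  have int: "integrable Q (\<lambda>x. \<Sum>k<n. indicator (?B k) x :: real)"
    using B by (simp add: less_top[symmetric])
  then show "integrable Q (visit_count T A n)"
    using eq by (simp cong: Bochner_Integration.integrable_cong)
  have "(\<integral>x. visit_count T A n x \<partial>Q) = (\<integral>x. (\<Sum>k<n. indicator (?B k) x :: real) \<partial>Q)"
    using eq by (rule Bochner_Integration.integral_cong[OF refl])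
  also have "\<dots> = (\<Sum>k<n. measure Q (?B k))"
    using B sets.sets_into_space[OF B] by (simp add: less_top[symmetric] Int_absorb2)
  finally show "(\<integral>x. visit_count T A n x \<partial>Q) = (\<Sum>k<n. measure Q (?B k))" .
qed

lemma integral_visit_count_invariant:
  assumes T: "T \<in> measurable M M" and P: "invariant_prob M T P" and A: "A \<in> sets M"
  shows "(\<integral>x. visit_count T A n x \<partial>P) = real n * measure P A"
proof -
  have "prob_space P" "sets P = sets M"
    and inv: "\<And>B. B \<in> sets M \<Longrightarrow> measure P (T -` B \<inter> space M) = measure P B"
    using P by (auto simp: invariant_prob_def prob_on_def)
  then show ?thesis
    using integral_visit_count(2)[OF prob_space.finite_measure _ T A]
      preimage_funpow_invariant[where f = "measure P", OF T inv A] by simp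
qed

lemma measure_frequent_upto_tendsto_0:
  assumes Q: "finite_measure Q" "sets Q = sets M" and T: "T \<in> measurable M M" and A: "A \<in> sets M"
    and "s < r" and null: "measure Q (liminf_frequency_gt M T A s) = 0"
  shows "(\<lambda>N. measure Q (frequent_upto M T A r N)) \<longlonglongrightarrow> 0"
proof -
  interpret finite_measure Q by fact
  let ?F = "frequent_upto M T A r"
  have F_sets: "?F N \<in> sets Q" for N
    using frequent_upto_sets[OF T A] Q(2) by simp
  have "decseq ?F"
    by (auto simp: decseq_def frequent_upto_def)
  have "(\<Inter>N. ?F N) \<subseteq> frequent_from M T A r 1"
    unfolding frequent_upto_def frequent_from_def by (auto, meson atLeastAtMost_iff order_refl)
  also have "\<dots> \<subseteq> liminf_frequency_gt M T A s"
    using \<open>s < r\<close> unfolding subset_iff mem_liminf_frequency_gt_iff by blast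
  finally have "measure Q (\<Inter>N. ?F N) \<le> measure Q (liminf_frequency_gt M T A s)"
    using liminf_frequency_gt_sets[OF T A] Q(2) by (intro finite_measure_mono) auto
  then have "measure Q (\<Inter>N. ?F N) = 0"
    using null measure_nonneg[of Q "\<Inter>N. ?F N"] by linarith
  moreover have "(\<lambda>N. measure Q (?F N)) \<longlonglongrightarrow> measure Q (\<Inter>N. ?F N)"
    using F_sets \<open>decseq ?F\<close> by (intro finite_Lim_measure_decseq) auto
  ultimately show ?thesis
    by simp
qed

lemma invariant_measure_le_of_null_liminf_frequency_gt:
  assumes T: "T \<in> measurable M M" and P: "invariant_prob M T P" and A: "A \<in> sets M"
    and "0 \<le> s" and null: "measure P (liminf_frequency_gt M T A s) = 0"
  shows "measure P A \<le> s"
proof (rule field_le_epsilon)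
  fix e :: real assume "0 < e"
  have "prob_space P" and sets_P: "sets P = sets M"
    using P by (auto simp: invariant_prob_def prob_on_def)
  interpret prob_space P by fact
  define r where "r = s + e / 3"
  define F where "F N = frequent_upto M T A r N" for N
  have F_sets: "F N \<in> sets M" for N
    using frequent_upto_sets[OF T A] by (simp add: F_def)
  have "(\<lambda>N. measure P (F N)) \<longlonglongrightarrow> 0"
    unfolding F_def using \<open>0 < e\<close>
    by (intro measure_frequent_upto_tendsto_0[OF finite_measure_axioms sets_P T A _ null]) (simp add: r_def)
  then have "eventually (\<lambda>N. measure P (F N) < e / 3) sequentially"
    using \<open>0 < e\<close> by (intro order_tendstoD(2)) auto
  then obtain N where N: "measure P (F N) < e / 3"
    by (auto simp: eventually_sequentially)
  obtain L :: nat where L: "real N < real L * (e / 3)"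
    using ex_less_of_nat_mult[of "e / 3"] \<open>0 < e\<close> by auto
  have integrable: "integrable P (visit_count T B L)" if "B \<in> sets M" for B
    using integral_visit_count(1)[OF finite_measure_axioms sets_P T that] .
  have "real L * measure P A = (\<integral>x. visit_count T A L x \<partial>P)"
    using integral_visit_count_invariant[OF T P A] by simp
  also have "\<dots> \<le> (\<integral>x. real L * r + visit_count T (F N) L x + real N \<partial>P)"
    using visit_count_le_by_blocks[OF T _, of _ r A L N] integrable[OF A] integrable[OF F_sets]
      \<open>0 \<le> s\<close> \<open>0 < e\<close> sets_eq_imp_space_eq[OF sets_P]
    by (intro integral_mono) (auto simp: F_def r_def)
  also have "\<dots> = real L * r + real L * measure P (F N) + real N"
    using integral_visit_count_invariant[OF T P F_sets] integrable[OF F_sets] by (simp add: prob_space)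
  also have "\<dots> < real L * (s + e)"
    using mult_left_mono[OF less_imp_le[OF N], of "real L"] L by (simp add: r_def algebra_simps)
  finally show "measure P A \<le> s + e"
    by (simp add: mult_less_cancel_left)
qed

lemma mult_measure_liminf_frequency_gt_le:
  assumes Q: "finite_measure Q" "sets Q = sets M" and T: "T \<in> measurable M M" and A: "A \<in> sets M"
    and bound: "\<And>k. measure Q ((T ^^ k) -` A \<inter> space M) \<le> c"
  shows "s * measure Q (liminf_frequency_gt M T A s) \<le> c"
proof -
  interpret finite_measure Q by fact
  define H where "H j = frequent_from M T A (s + 1 / Suc j) j" for j
  have H_sets: "H j \<in> sets Q" for j
    using frequent_from_sets[OF T A] Q(2) by (simp add: H_def)
  have "incseq H"
    unfolding incseq_def H_def by (intro allI impI frequent_from_antimono) (auto simp: frac_le)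
  have "(\<lambda>j. measure Q (H j)) \<longlonglongrightarrow> measure Q (\<Union>j. H j)"
    using H_sets \<open>incseq H\<close> by (intro finite_Lim_measure_incseq) auto
  also have "(\<Union>j. H j) = liminf_frequency_gt M T A s"
  proof
    show "(\<Union>j. H j) \<subseteq> liminf_frequency_gt M T A s"
      by (auto simp: H_def liminf_frequency_gt_def)
    have "frequent_from M T A (s + 1 / Suc m) N \<subseteq> H (max m N)" for m N
      unfolding H_def by (intro frequent_from_antimono) (auto simp: frac_le)
    then show "liminf_frequency_gt M T A s \<subseteq> (\<Union>j. H j)"
      by (auto simp: liminf_frequency_gt_def)
  qed
  finally have lim: "(\<lambda>j. s * measure Q (H j)) \<longlonglongrightarrow> s * measure Q (liminf_frequency_gt M T A s)"
    by (rule tendsto_mult_left)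
  have "s * measure Q (H j) \<le> c" for j
  proof -
    define L where "L = Suc j"
    have visits: "real L * s * indicator (H j) x \<le> visit_count T A L x" for x
    proof (cases "x \<in> H j")
      case True
      then have "\<forall>n\<ge>j. real n * (s + 1 / Suc j) \<le> visit_count T A n x"
        by (simp add: H_def frequent_from_def)
      then have "real L * (s + 1 / Suc j) \<le> visit_count T A L x"
        unfolding L_def by (metis le_SucI order_refl)
      moreover have "real L * s \<le> real L * (s + 1 / Suc j)"
        by (simp add: algebra_simps)
      ultimately show ?thesis
        using True by simp
    qed (simp add: visit_count_nonneg)
    have "real L * (s * measure Q (H j)) = (\<integral>x. real L * s * indicator (H j) x \<partial>Q)"
      using H_sets by simp
    also have "\<dots> \<le> (\<integral>x. visit_count T A L x \<partial>Q)"
      using visits integral_visit_count(1)[OF Q T A] H_sets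
      by (intro integral_mono) (auto simp: less_top[symmetric])
    also have "\<dots> = (\<Sum>k<L. measure Q ((T ^^ k) -` A \<inter> space M))"
      by (rule integral_visit_count(2)[OF Q T A])
    also have "\<dots> \<le> real L * c"
      using sum_mono[of "{..<L}", OF bound] by simp
    finally show ?thesis
      by (simp add: L_def)
  qed
  then show ?thesis
    using lim by (intro LIMSEQ_le_const2) auto
qed

lemma upper_probability_ge_of_full_liminf_frequency_gt:
  assumes T: "T \<in> measurable M M" and V: "upper_probability M V" "invariant_capacity M T V"
    and "core M V \<noteq> {}" and A: "A \<in> sets M" and "0 < s"
    and full: "V (liminf_frequency_gt M T A s) = 1"
  shows "s \<le> V A"
proof -
  let ?G = "liminf_frequency_gt M T A s"
  have "measure Q ?G \<le> V A / s" if "Q \<in> core M V" for Q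
  proof -
    have Q: "prob_space Q" "sets Q = sets M" and QV: "\<And>B. B \<in> sets M \<Longrightarrow> measure Q B \<le> V B"
      using that by (auto simp: core_def prob_on_def)
    have "measure Q ((T ^^ k) -` A \<inter> space M) \<le> V A" for k
      using QV[OF measurable_sets[OF measurable_compose_n[OF T] A]]
        preimage_funpow_invariant[where f = V, OF T _ A] V(2)
      by (simp add: invariant_capacity_def)
    then have "s * measure Q ?G \<le> V A"
      using mult_measure_liminf_frequency_gt_le[OF prob_space.finite_measure[OF Q(1)] Q(2) T A] by blast
    then show ?thesis
      using \<open>0 < s\<close> by (simp add: field_simps)
  qed
  then have "V ?G \<le> V A / s"
    using V(1) liminf_frequency_gt_sets[OF T A] \<open>core M V \<noteq> {}\<close>
    by (auto simp: upper_probability_def intro!: cSUP_least)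
  then show ?thesis
    using full \<open>0 < s\<close> by (simp add: field_simps)
qed

lemma measure_nonzero_if_absolutely_continuous:
  assumes "finite_measure P" and "absolutely_continuous P Q" and "A \<in> sets P"
    and "measure Q A \<noteq> 0"
  shows "measure P A \<noteq> 0"
proof
  assume "measure P A = 0"
  then have "emeasure P A = 0"
    using finite_measure.emeasure_eq_measure[OF assms(1)] by simp
  then have "emeasure Q A = 0"
    using absolutely_continuousD[OF assms(2,3)] by simp
  then show False
    using \<open>measure Q A \<noteq> 0\<close> by (simp add: measure_def)
qed

lemma ergodic_capacity_liminf_frequency_gt_eq_1:
  assumes T: "T \<in> measurable M M" and "ergodic_capacity M T V"
    and P: "P \<in> core M V" "absolutely_continuous P Pstar" and Pstar: "invariant_prob M T Pstar"
    and A: "A \<in> sets M" and "0 \<le> s" "s < measure Pstar A"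
  shows "V (liminf_frequency_gt M T A s) = 1"
proof -
  let ?G = "liminf_frequency_gt M T A s"
  have G: "?G \<in> sets M" "?G \<in> inv_sets M T"
    using liminf_frequency_gt_sets[OF T A] liminf_frequency_gt_inv_sets[OF T A] .
  have P_prob: "prob_space P" "sets P = sets M" and "measure P ?G \<le> V ?G"
    using P(1) G(1) by (auto simp: core_def prob_on_def)
  have "measure Pstar ?G \<noteq> 0"
    using invariant_measure_le_of_null_liminf_frequency_gt[OF T Pstar A \<open>0 \<le> s\<close>]
      \<open>s < measure Pstar A\<close> by (meson not_le)
  then have "measure P ?G \<noteq> 0"
    using P_prob G(1)
    by (intro measure_nonzero_if_absolutely_continuous[OF prob_space.finite_measure P(2)]) auto
  then have "0 < V ?G"
    using \<open>measure P ?G \<le> V ?G\<close> measure_nonneg[of P ?G] by linarith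
  then show ?thesis
    using \<open>ergodic_capacity M T V\<close> G(2) by (auto simp: ergodic_capacity_def)
qed

theorem lemma3p2:
  fixes M :: "'a measure" and T :: "'a \<Rightarrow> 'a" and V :: "'a set \<Rightarrow> real"
    and Pstar :: "'a measure"
  assumes "T \<in> measurable M M"
    and "upper_probability M V"
    and "continuous_capacity M V"
    and "invariant_capacity M T V"
    and "ergodic_capacity M T V"
    and "ergodic_prob M T Pstar"
    and "\<exists>P\<in>invariant_core M T V. absolutely_continuous P Pstar"
  shows "Pstar \<in> invariant_core M T V"
proof -
  obtain P where P: "P \<in> core M V" "absolutely_continuous P Pstar"
    using assms(7) by (auto simp: invariant_core_def)
  have Pstar: "invariant_prob M T Pstar"
    using assms(6) by (simp add: ergodic_prob_def)
  have "measure Pstar A \<le> V A" if A: "A \<in> sets M" for A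
  proof (rule ccontr)
    assume "\<not> measure Pstar A \<le> V A"
    then obtain s where s: "V A < s" "s < measure Pstar A"
      by (meson dense not_le)
    have "measure P A \<le> V A"
      using P(1) A by (simp add: core_def)
    then have "0 < s"
      using s(1) measure_nonneg[of P A] by linarith
    then have "V (liminf_frequency_gt M T A s) = 1"
      using ergodic_capacity_liminf_frequency_gt_eq_1[OF assms(1,5) P Pstar A] s(2) by simp
    then have "s \<le> V A"
      using upper_probability_ge_of_full_liminf_frequency_gt[OF assms(1,2,4) _ A \<open>0 < s\<close>] P(1)
      by blast
    then show False
      using s(1) by simp
  qed
  then show ?thesis
    using Pstar P(1) by (auto simp: invariant_core_def core_def invariant_prob_def)
qed

end
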